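(* For every integer $n>2$, the number of pairs $(s,t)\in S_n\times S_n$ such that $[s,t]=sts^{-1}t^{-1}$ is a $3$-cycle and $s$ is a cycle (of some length $k\in\{2,\dots,n\}$, i.e. a single cycle together with fixed points) equals $$\#\mathcal{B}_2(n)=\frac{1}{24}(n-1)(n-2)(n^2+5n+12)\,n!.$$
   Context: Permutations compose as functions. *)

theory Defs
  imports "HOL-Combinatorics.Cycles" Complex_Main
begin

definition is_k_cycle :: "nat \<Rightarrow> ('a \<Rightarrow> 'a) \<Rightarrow> bool" where
  "is_k_cycle k p \<longleftrightarrow> (\<exists>cs. distinct cs \<and> length cs = k \<and> p = cycle_of_list cs)"

end

theory Submission
  imports Defs
begin

text \<open>
  Fix a permutation s of a finite set S and write u = t s t^-1.  Then the commutator equals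
  s u^-1 = c^-1 with c = u s^-1, so the partners t of s correspond to the 3-cycles c for which
  c s is again conjugate to s, each such c being hit by as many t as the centraliser of s has
  elements.  The number of partners is constant on the conjugacy class of s, and the
  orbit-stabiliser identity |class| * |centraliser| = |S|! turns the sum over the class into
  |S|! times the number of such 3-cycles c (lemma sum_comm_partners_over_class).

  For the standard k-cycle (1 2 ... k) inside {1..n} a case analysis on how the support of the
  3-cycle c meets {1..k} shows that c (1 2 ... k) is a k-cycle exactly for the cycles (p q r)
  with p < q < r <= k and the cycles (b' b d) with b <= k < d and b' the image of b, which
  gives C(k,3) + k (n - k) of them (lemma card_good_3cycles).
\<close>

abbreviation cyc :: "'a list \<Rightarrow> 'a \<Rightarrow> 'a" where "cyc \<equiv> cycle_of_list"

abbreviation tr :: "'a \<Rightarrow> 'a \<Rightarrow> 'a \<Rightarrow> 'a" where "tr \<equiv> Transposition.transpose"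

lemma cyc_split: "cyc (x # xs @ y # ys) = cyc (x # xs @ [y]) \<circ> cyc (y # ys)"
proof (induction xs arbitrary: x)
  case Nil show ?case by simp
next
  case (Cons z zs) then show ?case by (simp add: o_assoc)
qed

lemma cyc_snoc:
  assumes "distinct (x # xs @ [y])"
  shows "cyc (x # xs @ [y]) = tr x y \<circ> cyc (x # xs)"
proof -
  have "cyc (x # xs @ [y]) = cyc (rotate (length (x # xs)) ((x # xs) @ [y]))"
    using cycle_of_list_rotate_independent[OF assms, of "length (x # xs)"] by simp
  also have "rotate (length (x # xs)) ((x # xs) @ [y]) = [y] @ (x # xs)" by (rule rotate_append)
  hence "cyc (rotate (length (x # xs)) ((x # xs) @ [y])) = cyc (y # x # xs)" by simp
  finally show ?thesis by (simp add: transpose_commute)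
qed

lemma cyc_merge:
  assumes "distinct (x # A @ y # B)"
  shows "cyc (x # A @ y # B) = tr x y \<circ> cyc (x # A) \<circ> cyc (y # B)"
proof -
  have "distinct (x # A @ [y])" using assms by auto
  then show ?thesis using cyc_split[of x A y B] cyc_snoc[of x A y] by simp
qed

lemma cyc_funpow_nth:
  assumes "distinct L" "i < length L"
  shows "(cyc L ^^ m) (L ! i) = L ! ((m + i) mod length L)"
proof -
  have "map (cyc L ^^ m) L = rotate m L" by (rule cyclic_rotation[OF assms(1)])
  hence "(map (cyc L ^^ m) L) ! i = rotate m L ! i" by simp
  thus ?thesis using assms(2) by (simp add: nth_rotate)
qed

lemma cyc_nth:
  assumes "distinct L" "i < length L"
  shows "cyc L (L ! i) = L ! (Suc i mod length L)"
  using cyc_funpow_nth[OF assms, of 1] by simp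

lemma cyc_moved_points:
  assumes "distinct L" "2 \<le> length L"
  shows "{x. cyc L x \<noteq> x} = set L"
proof
  show "{x. cyc L x \<noteq> x} \<subseteq> set L" using id_outside_supp by fastforce
next
  show "set L \<subseteq> {x. cyc L x \<noteq> x}"
  proof
    fix x assume "x \<in> set L"
    then obtain i where i: "i < length L" "x = L ! i" by (auto simp: in_set_conv_nth)
    have ne: "Suc i mod length L \<noteq> i"
    proof (cases "Suc i < length L")
      case True then show ?thesis by simp
    next
      case False then have "Suc i = length L" using i by simp
      then show ?thesis using assms(2) by simp
    qed
    have "Suc i mod length L < length L" using i by (intro mod_less_divisor) linarith
    hence "L ! (Suc i mod length L) \<noteq> L ! i"
      using ne i assms(1) by (simp add: nth_eq_iff_index_eq)
    thus "x \<in> {x. cyc L x \<noteq> x}" using cyc_nth[OF assms(1) i(1)] i by simp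
  qed
qed

lemma cyc_rotate_to:
  assumes "distinct L" "b \<in> set L"
  obtains R where "cyc L = cyc (b # R)" "distinct (b # R)" "set (b # R) = set L"
    "length (b # R) = length L"
proof -
  obtain X Y where L: "L = X @ b # Y" using split_list[OF assms(2)] by blast
  have "rotate (length X) (X @ (b # Y)) = (b # Y) @ X" by (rule rotate_append)
  hence "cyc L = cyc (b # Y @ X)"
    using cycle_of_list_rotate_independent[OF assms(1), of "length X"] L by simp
  moreover have "distinct (b # Y @ X)" "set (b # Y @ X) = set L" "length (b # Y @ X) = length L"
    using assms(1) L by auto
  ultimately show ?thesis using that by blast
qed

lemma cyc_head_value: "b \<notin> set (x # L) \<Longrightarrow> cyc (b # x # L) b = x"
  by (simp add: id_outside_supp)

lemma cyc_comp_keeps_set: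
  assumes "\<And>w. w \<in> set L \<Longrightarrow> g w = w"
  shows "(cyc L \<circ> g) ` set L \<subseteq> set L"
  using assms permutes_in_image[OF cycle_permutes[of L]] by auto

lemma tr_cyc_commute:
  assumes "u \<notin> set L" "v \<notin> set L"
  shows "tr u v \<circ> cyc L = cyc L \<circ> tr u v"
proof
  fix x
  show "(tr u v \<circ> cyc L) x = (cyc L \<circ> tr u v) x"
  proof (cases "x \<in> set L")
    case True
    then have "cyc L x \<in> set L" using cycle_permutes[of L] by (simp add: permutes_in_image)
    then show ?thesis using True assms by (auto simp: transpose_def)
  next
    case False
    then have "tr u v x \<notin> set L" using assms by (auto simp: transpose_def)
    then show ?thesis using False by (simp add: id_outside_supp)
  qed
qed

lemma tr_cancel_left: "tr u v \<circ> (tr u v \<circ> X) = X"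
  by (simp add: fun_eq_iff)

lemma cyc3_values:
  assumes "distinct [a, b, d]"
  shows "cyc [a, b, d] a = b" "cyc [a, b, d] b = d" "cyc [a, b, d] d = a"
    "x \<notin> {a, b, d} \<Longrightarrow> cyc [a, b, d] x = x"
  using assms by (auto simp: transpose_def)

lemma cyc3_rotate: "distinct [a, b, d] \<Longrightarrow> cyc [a, b, d] = cyc [b, d, a]"
  by (auto simp: fun_eq_iff transpose_def)

lemma cyc3_permutes: "a \<in> S \<Longrightarrow> b \<in> S \<Longrightarrow> d \<in> S \<Longrightarrow> cyc [a, b, d] permutes S"
  using permutes_subset[OF cycle_permutes[of "[a, b, d]"]] by simp

lemma cyc3_is_3cycle: "distinct [a, b, d] \<Longrightarrow> is_k_cycle 3 (cyc [a, b, d])"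
  unfolding is_k_cycle_def by (intro exI[of _ "[a, b, d]"]) simp

lemma is_3cycle_E:
  assumes "c permutes S" "is_k_cycle 3 c"
  obtains a b d where "distinct [a, b, d]" "a \<in> S" "b \<in> S" "d \<in> S" "c = cyc [a, b, d]"
proof -
  obtain cs where cs: "distinct cs" "length cs = 3" "c = cyc cs"
    using assms(2) unfolding is_k_cycle_def by blast
  then obtain a b d where abd: "cs = [a, b, d]" by (auto simp: length_Suc_conv numeral_3_eq_3)
  have "{x. c x \<noteq> x} = {a, b, d}" using cyc_moved_points[of cs] cs abd by simp
  moreover have "{x. c x \<noteq> x} \<subseteq> S" using permutes_not_in[OF assms(1)] by blast
  ultimately have "a \<in> S" "b \<in> S" "d \<in> S" by blast+
  then show ?thesis using that cs abd by blast
qed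

lemma inv_3cycle:
  assumes "is_k_cycle 3 c"
  shows "is_k_cycle 3 (inv c)"
proof -
  obtain cs where cs: "distinct cs" "length cs = 3" "c = cyc cs"
    using assms unfolding is_k_cycle_def by blast
  then obtain a b d where abd: "cs = [a, b, d]" by (auto simp: length_Suc_conv numeral_3_eq_3)
  have d: "distinct [d, b, a]" using cs abd by auto
  have "inv (cyc [a, b, d]) = cyc [d, b, a]"
    by (rule inv_unique_comp) (use d in \<open>auto simp: fun_eq_iff transpose_def\<close>)
  then show ?thesis using cyc3_is_3cycle[OF d] cs abd by simp
qed

lemma kcycle_moved_card:
  assumes "is_k_cycle k f" "2 \<le> k"
  shows "finite {x. f x \<noteq> x}" "card {x. f x \<noteq> x} = k"
proof -
  obtain cs where cs: "distinct cs" "length cs = k" "f = cyc cs"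
    using assms(1) unfolding is_k_cycle_def by blast
  then have "{x. f x \<noteq> x} = set cs" using cyc_moved_points[of cs] assms(2) by simp
  then show "finite {x. f x \<noteq> x}" "card {x. f x \<noteq> x} = k" using cs distinct_card by auto
qed

lemma kcycle_length_unique:
  assumes "is_k_cycle k f" "2 \<le> k" "is_k_cycle m f" "2 \<le> m"
  shows "k = m"
  using kcycle_moved_card[OF assms(1,2)] kcycle_moved_card[OF assms(3,4)] by simp

lemma kcycle_orbit:
  assumes "is_k_cycle k f" "2 \<le> k" "f x \<noteq> x" "f y \<noteq> y"
  shows "\<exists>m. (f ^^ m) x = y"
proof -
  obtain cs where cs: "distinct cs" "length cs = k" "f = cyc cs"
    using assms(1) unfolding is_k_cycle_def by blast
  then have "{x. f x \<noteq> x} = set cs" using cyc_moved_points[of cs] assms(2) by simp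
  then have "x \<in> set cs" "y \<in> set cs" using assms(3,4) by auto
  then obtain i j where i: "i < k" "x = cs ! i" and j: "j < k" "y = cs ! j"
    using cs(2) by (metis in_set_conv_nth)
  have "(f ^^ (j + k - i)) x = cs ! ((j + k - i + i) mod k)"
    using cyc_funpow_nth[OF cs(1), of i "j + k - i"] cs i by simp
  also have "(j + k - i + i) mod k = j" using i j by simp
  finally show ?thesis using j by blast
qed

lemma kcycle_no_invariant_split:
  assumes "is_k_cycle k f" "2 \<le> k" "f ` A \<subseteq> A" "x \<in> A" "y \<notin> A" "f x \<noteq> x" "f y \<noteq> y"
  shows False
proof -
  obtain m where m: "(f ^^ m) x = y" using kcycle_orbit[OF assms(1,2,6,7)] by blast
  have "(f ^^ m') x \<in> A" for m' by (induction m') (use assms(3,4) in auto)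
  thus False using m assms(5) by metis
qed

(* Conjugation preserves the cycle type: g (x1 ... xk) g^-1 = (g x1 ... g xk). *)
lemma kcycle_conj:
  assumes "bij g" "is_k_cycle k c"
  shows "is_k_cycle k (g \<circ> c \<circ> inv g)"
proof -
  obtain cs where cs: "distinct cs" "length cs = k" "c = cyc cs"
    using assms(2) unfolding is_k_cycle_def by blast
  have "g \<circ> c \<circ> inv g = cyc (map g cs)" using conjugation_of_cycle[OF cs(1) assms(1)] cs(3) by simp
  moreover have "distinct (map g cs)"
    using cs(1) bij_is_inj[OF assms(1)] by (auto simp: distinct_map inj_def inj_on_def)
  moreover have "length (map g cs) = k" using cs(2) by simp
  ultimately show ?thesis unfolding is_k_cycle_def by blast
qed

lemma permutes_map_list:
  assumes "distinct xs" "distinct ys" "length xs = length ys" "set xs \<subseteq> S" "set ys \<subseteq> S"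
  shows "\<exists>g. g permutes S \<and> map g xs = ys"
  using assms
proof (induction xs arbitrary: ys)
  case Nil then show ?case using permutes_id by fastforce
next
  case (Cons x xs)
  then obtain y ys' where ys: "ys = y # ys'" by (cases ys) auto
  obtain g where g: "g permutes S" "map g xs = ys'" using Cons.IH[of ys'] Cons.prems ys by auto
  define h where "h = tr y (g x) \<circ> g"
  have xS: "x \<in> S" "y \<in> S" using Cons.prems ys by auto
  have gx: "g x \<in> S" using permutes_in_image[OF g(1)] xS by simp
  have hp: "h permutes S"
    unfolding h_def by (rule permutes_compose[OF g(1) permutes_swap_id[OF xS(2) gx]])
  have "h z = g z" if "z \<in> set xs" for z
  proof -
    have "g z \<noteq> y" using g(2) that Cons.prems(2) ys by auto
    moreover have "g z \<noteq> g x"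
      using permutes_inj[OF g(1)] that Cons.prems(1) by (metis distinct.simps(2) injD)
    ultimately show ?thesis unfolding h_def by (simp add: transpose_def)
  qed
  then have "map h xs = map g xs" by simp
  then have "map h xs = ys'" using g(2) by simp
  moreover have "h x = y" unfolding h_def by simp
  ultimately show ?case using hp ys by auto
qed

lemma cyc3_comp_cycle_reorder:
  assumes "distinct (p # A @ q # B @ r # C)"
  shows "cyc [p, q, r] \<circ> cyc (p # A @ q # B @ r # C) = cyc (p # A @ r # C @ q # B)"
proof -
  have d: "p \<noteq> q" "p \<noteq> r" "q \<noteq> r" using assms by auto
  have e1: "cyc (p # A @ q # (B @ r # C)) = tr p q \<circ> (cyc (p # A) \<circ> cyc (q # B @ r # C))"
    using cyc_merge[of p A q "B @ r # C"] assms by (simp add: o_assoc)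
  have e2: "cyc (q # B @ r # C) = tr q r \<circ> (cyc (q # B) \<circ> cyc (r # C))"
    using cyc_merge[of q B r C] assms by (simp add: o_assoc)
  have e3: "cyc (p # A @ r # (C @ q # B)) = tr p r \<circ> (cyc (p # A) \<circ> cyc (r # C @ q # B))"
    using cyc_merge[of p A r "C @ q # B"] assms by (auto simp add: o_assoc)
  have e4: "cyc (r # C @ q # B) = tr r q \<circ> (cyc (r # C) \<circ> cyc (q # B))"
    using cyc_merge[of r C q B] assms by (auto simp add: o_assoc)
  have comm: "cyc (q # B) \<circ> cyc (r # C) = cyc (r # C) \<circ> cyc (q # B)"
    using cycles_commute[of "q # B" "r # C"] assms by auto
  have t3: "tr p q \<circ> (tr q r \<circ> (tr p q \<circ> X)) = tr p r \<circ> X" for X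
    using d by (auto simp: fun_eq_iff transpose_def)
  have "cyc [p, q, r] \<circ> cyc (p # A @ q # B @ r # C) =
     tr p q \<circ> (tr q r \<circ> (tr p q \<circ> (cyc (p # A) \<circ> (tr q r \<circ> (cyc (q # B) \<circ> cyc (r # C))))))"
    using e1 e2 by (simp add: o_assoc)
  also have "\<dots> = tr p r \<circ> (cyc (p # A) \<circ> (tr r q \<circ> (cyc (r # C) \<circ> cyc (q # B))))"
    using t3 comm by (simp add: transpose_commute)
  also have "\<dots> = cyc (p # A @ r # C @ q # B)" using e3 e4 by simp
  finally show ?thesis .
qed

lemma cyc3_comp_cycle_split3:
  assumes "distinct (p # A @ q # B @ r # C)"
  shows "cyc [p, r, q] \<circ> cyc (p # A @ q # B @ r # C) = cyc (p # A) \<circ> cyc (q # B) \<circ> cyc (r # C)"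
proof -
  have d: "p \<noteq> q" "p \<noteq> r" "q \<noteq> r" using assms by auto
  have e1: "cyc (p # A @ q # (B @ r # C)) = tr p q \<circ> (cyc (p # A) \<circ> cyc (q # B @ r # C))"
    using cyc_merge[of p A q "B @ r # C"] assms by (simp add: o_assoc)
  have e2: "cyc (q # B @ r # C) = tr q r \<circ> (cyc (q # B) \<circ> cyc (r # C))"
    using cyc_merge[of q B r C] assms by (simp add: o_assoc)
  have t3: "tr p r \<circ> (tr r q \<circ> (tr p q \<circ> X)) = tr q r \<circ> X" for X
    using d by (auto simp: fun_eq_iff transpose_def)
  have cm: "tr q r \<circ> cyc (p # A) = cyc (p # A) \<circ> tr q r"
    using assms by (intro tr_cyc_commute) auto
  have "cyc [p, r, q] \<circ> cyc (p # A @ q # B @ r # C) =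
     tr p r \<circ> (tr r q \<circ> (tr p q \<circ> (cyc (p # A) \<circ> (tr q r \<circ> (cyc (q # B) \<circ> cyc (r # C))))))"
    using e1 e2 by (simp add: o_assoc)
  also have "\<dots> = tr q r \<circ> (cyc (p # A) \<circ> (tr q r \<circ> (cyc (q # B) \<circ> cyc (r # C))))"
    by (rule t3)
  also have "\<dots> = (tr q r \<circ> cyc (p # A)) \<circ> (tr q r \<circ> (cyc (q # B) \<circ> cyc (r # C)))"
    by (simp add: o_assoc)
  also have "\<dots> = cyc (p # A) \<circ> (tr q r \<circ> (tr q r \<circ> (cyc (q # B) \<circ> cyc (r # C))))"
    by (simp only: cm o_assoc)
  also have "\<dots> = cyc (p # A) \<circ> cyc (q # B) \<circ> cyc (r # C)"
    by (simp only: tr_cancel_left) (simp add: o_assoc)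
  finally show ?thesis .
qed

lemma cyc3_comp_cycle_split2:
  assumes "distinct (b # X @ a # Y)" "d \<notin> set (b # X @ a # Y)"
  shows "cyc [a, b, d] \<circ> cyc (b # X @ a # Y) = cyc (b # X) \<circ> cyc (a # Y @ [d])"
proof -
  have e1: "cyc (b # (X @ a # Y) @ [d]) = tr b d \<circ> cyc (b # X @ a # Y)"
    using cyc_snoc[of b "X @ a # Y" d] assms by auto
  have e2: "cyc (b # X @ a # (Y @ [d])) = tr b a \<circ> (cyc (b # X) \<circ> cyc (a # Y @ [d]))"
    using cyc_merge[of b X a "Y @ [d]"] assms by (auto simp add: o_assoc)
  have "cyc [a, b, d] \<circ> cyc (b # X @ a # Y) = tr a b \<circ> (tr b d \<circ> cyc (b # X @ a # Y))"
    by (simp add: o_assoc)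
  also have "\<dots> = tr a b \<circ> (tr b a \<circ> (cyc (b # X) \<circ> cyc (a # Y @ [d])))"
    using e1 e2 by simp
  also have "\<dots> = cyc (b # X) \<circ> cyc (a # Y @ [d])"
    by (simp only: transpose_commute[of b a] tr_cancel_left)
  finally show ?thesis .
qed

lemma cyc3_comp_cycle_extend:
  assumes "distinct (a # R)" "b \<notin> set (a # R)" "d \<notin> set (a # R)" "b \<noteq> d"
  shows "cyc [a, b, d] \<circ> cyc (a # R) = cyc (a # R @ [b, d])"
proof -
  have e1: "cyc (a # R @ b # [d]) = tr a b \<circ> (cyc (a # R) \<circ> cyc [b, d])"
    using cyc_merge[of a R b "[d]"] assms by (auto simp add: o_assoc)
  have cm: "tr b d \<circ> cyc (a # R) = cyc (a # R) \<circ> tr b d"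
    using assms by (intro tr_cyc_commute) auto
  have "cyc [a, b, d] \<circ> cyc (a # R) = tr a b \<circ> (tr b d \<circ> cyc (a # R))"
    by (simp add: o_assoc)
  also have "\<dots> = tr a b \<circ> (cyc (a # R) \<circ> tr b d)" using cm by simp
  also have "\<dots> = cyc (a # R @ [b, d])" using e1 by simp
  finally show ?thesis .
qed

definition std_cycle :: "nat \<Rightarrow> nat \<Rightarrow> nat" where
  "std_cycle k = cyc [1..<Suc k]"

lemma std_cycle_moved_points: "2 \<le> k \<Longrightarrow> {x. std_cycle k x \<noteq> x} = {1..k}"
  unfolding std_cycle_def using cyc_moved_points[of "[1..<Suc k]"]
  by (simp del: upt_Suc add: atLeastLessThanSuc_atLeastAtMost)

lemma std_cycle_permutes:
  assumes "k \<le> n"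
  shows "std_cycle k permutes {1..n}"
proof -
  have "set [1..<Suc k] \<subseteq> {1..n}" using assms by auto
  then show ?thesis unfolding std_cycle_def by (rule permutes_subset[OF cycle_permutes])
qed

lemma std_cycle_is_kcycle: "is_k_cycle k (std_cycle k)"
  unfolding is_k_cycle_def std_cycle_def by (intro exI[of _ "[1..<Suc k]"]) simp

lemma std_cycle_fix: "2 \<le> k \<Longrightarrow> x \<notin> {1..k} \<Longrightarrow> std_cycle k x = x"
  using std_cycle_moved_points[of k] by blast

lemma std_cycle_move: "2 \<le> k \<Longrightarrow> x \<in> {1..k} \<Longrightarrow> std_cycle k x \<noteq> x"
  using std_cycle_moved_points[of k] by blast

lemma std_cycle_in: "2 \<le> k \<Longrightarrow> x \<in> {1..k} \<Longrightarrow> std_cycle k x \<in> {1..k}"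
  using permutes_in_image[OF std_cycle_permutes[of k k, OF order_refl]] by simp

lemma std_cycle_from:
  assumes "a \<in> {1..k}"
  obtains R where "std_cycle k = cyc (a # R)" "distinct (a # R)" "set (a # R) = {1..k}"
    "length (a # R) = k"
proof -
  have d: "distinct [1..<Suc k]" and s: "set [1..<Suc k] = {1..k}" and l: "length [1..<Suc k] = k"
    by auto
  have "a \<in> set [1..<Suc k]" unfolding s by (rule assms)
  then obtain R where R: "cyc [1..<Suc k] = cyc (a # R)" "distinct (a # R)"
    "set (a # R) = set [1..<Suc k]" "length (a # R) = length [1..<Suc k]"
    by (rule cyc_rotate_to[OF d])
  show ?thesis by (rule that) (use R s l in \<open>simp_all only: std_cycle_def\<close>)
qed

lemma upt_split: "i \<le> j \<Longrightarrow> j \<le> m \<Longrightarrow> [i..<m] = [i..<j] @ [j..<m]"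
  using upt_add_eq_append[of i j "m - j"] by simp

lemma std_cycle_cut3:
  assumes "1 \<le> p" "p < q" "q < r" "r \<le> k"
  defines "L \<equiv> p # [Suc p..<q] @ q # [Suc q..<r] @ r # ([Suc r..<Suc k] @ [1..<p])"
  shows "std_cycle k = cyc L" "distinct L" "set L = {1..k}"
proof -
  have e1: "[1..<Suc k] = [1..<p] @ [p..<Suc k]" using assms by (intro upt_split) auto
  have e2: "[p..<Suc k] = p # [Suc p..<q] @ q # [Suc q..<r] @ r # [Suc r..<Suc k]"
  proof -
    have "[p..<Suc k] = p # [Suc p..<Suc k]" using assms by (intro upt_conv_Cons) auto
    also have "[Suc p..<Suc k] = [Suc p..<q] @ [q..<Suc k]" using assms by (intro upt_split) auto
    also have "[q..<Suc k] = q # [Suc q..<Suc k]" using assms by (intro upt_conv_Cons) auto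
    also have "[Suc q..<Suc k] = [Suc q..<r] @ [r..<Suc k]" using assms by (intro upt_split) auto
    also have "[r..<Suc k] = r # [Suc r..<Suc k]" using assms by (intro upt_conv_Cons) auto
    finally show ?thesis by simp
  qed
  have "rotate (length [1..<p]) ([1..<p] @ [p..<Suc k]) = [p..<Suc k] @ [1..<p]"
    by (rule rotate_append)
  then have L: "L = rotate (length [1..<p]) [1..<Suc k]" using e1 e2 unfolding L_def by simp
  show "std_cycle k = cyc L"
    unfolding std_cycle_def L using cycle_of_list_rotate_independent[of "[1..<Suc k]"] by simp
  show "distinct L" unfolding L by simp
  show "set L = {1..k}" unfolding L by auto
qed

lemma disjoint_cycles_not_kcycle:
  assumes "distinct (L1 @ L2)" "2 \<le> length L1" "2 \<le> length L2" "2 \<le> k"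
  shows "\<not> is_k_cycle k (cyc L1 \<circ> cyc L2)"
proof
  assume K: "is_k_cycle k (cyc L1 \<circ> cyc L2)"
  obtain x y where xy: "x \<in> set L1" "y \<in> set L2"
    using assms(2,3) by (metis length_0_conv list.set_intros(1) neq_Nil_conv not_numeral_le_zero)
  have m1: "{z. cyc L1 z \<noteq> z} = set L1" and m2: "{z. cyc L2 z \<noteq> z} = set L2"
    using cyc_moved_points assms by auto
  have disj: "set L1 \<inter> set L2 = {}" using assms(1) by auto
  have "cyc L2 x = x" using xy(1) disj by (intro id_outside_supp) auto
  then have "(cyc L1 \<circ> cyc L2) x \<noteq> x" using xy(1) m1 by auto
  moreover have "(cyc L1 \<circ> cyc L2) y \<noteq> y"
  proof -
    have "cyc L2 y \<in> set L2" using permutes_in_image[OF cycle_permutes[of L2]] xy(2) by simp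
    then have "cyc L1 (cyc L2 y) = cyc L2 y" using disj by (intro id_outside_supp) auto
    moreover have "cyc L2 y \<noteq> y" using m2 xy(2) by auto
    ultimately show ?thesis by simp
  qed
  moreover have "(cyc L1 \<circ> cyc L2) ` set L1 \<subseteq> set L1"
    using disj m2 by (intro cyc_comp_keeps_set) auto
  moreover have "y \<notin> set L1" using xy(2) disj by auto
  ultimately show False using kcycle_no_invariant_split[OF K assms(4)] xy(1) by blast
qed

(* No point in {1..k}: the product has the two orbits {a,b,d} and {1..k}. *)
lemma not_kcycle_disjoint:
  assumes "2 \<le> k" "distinct [a, b, d]" "a \<notin> {1..k}" "b \<notin> {1..k}" "d \<notin> {1..k}"
  shows "\<not> is_k_cycle k (cyc [a, b, d] \<circ> std_cycle k)"
proof
  assume K: "is_k_cycle k (cyc [a, b, d] \<circ> std_cycle k)"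
  have one: "(1::nat) \<in> {1..k}" using assms(1) by simp
  have "std_cycle k 1 \<notin> {a, b, d}" using std_cycle_in[OF assms(1) one] assms(3-5) by blast
  hence f1: "(cyc [a, b, d] \<circ> std_cycle k) 1 \<noteq> 1"
    using cyc3_values(4)[OF assms(2)] std_cycle_move[OF assms(1) one] by simp
  have fa: "(cyc [a, b, d] \<circ> std_cycle k) a \<noteq> a"
    using std_cycle_fix[OF assms(1,3)] cyc3_values(1)[OF assms(2)] assms(2) by simp
  have inv: "(cyc [a, b, d] \<circ> std_cycle k) ` {a, b, d} \<subseteq> {a, b, d}"
    using std_cycle_fix[OF assms(1,3)] std_cycle_fix[OF assms(1,4)] std_cycle_fix[OF assms(1,5)]
      cyc3_values(1-3)[OF assms(2)] by simp
  have "1 \<notin> {a, b, d}" using one assms(3-5) by blast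
  then show False using kcycle_no_invariant_split[OF K assms(1) inv _ _ fa f1] by blast
qed

(* One point in {1..k}: the product is a (k+2)-cycle. *)
lemma not_kcycle_one_common:
  assumes "2 \<le> k" "distinct [a, b, d]" "a \<in> {1..k}" "b \<notin> {1..k}" "d \<notin> {1..k}"
  shows "\<not> is_k_cycle k (cyc [a, b, d] \<circ> std_cycle k)"
proof
  assume K: "is_k_cycle k (cyc [a, b, d] \<circ> std_cycle k)"
  obtain R where R: "std_cycle k = cyc (a # R)" "distinct (a # R)" "set (a # R) = {1..k}"
    "length (a # R) = k" using std_cycle_from[OF assms(3)] by blast
  have bd: "b \<notin> set (a # R)" "d \<notin> set (a # R)" using R(3) assms(4,5) by simp_all
  have "cyc [a, b, d] \<circ> std_cycle k = cyc (a # R @ [b, d])"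
    using cyc3_comp_cycle_extend[OF R(2) bd] R(1) assms(2) by simp
  moreover have "distinct (a # R @ [b, d])" using R(2) bd assms(2) by auto
  moreover have "length (a # R @ [b, d]) = k + 2" using R(4) by simp
  ultimately have "is_k_cycle (k + 2) (cyc [a, b, d] \<circ> std_cycle k)"
    unfolding is_k_cycle_def by blast
  from kcycle_length_unique[OF K assms(1) this] show False by simp
qed

lemma kcycle_two_common_iff:
  assumes "2 \<le> k" "distinct [a, b, d]" "a \<in> {1..k}" "b \<in> {1..k}" "d \<notin> {1..k}"
  shows "is_k_cycle k (cyc [a, b, d] \<circ> std_cycle k) \<longleftrightarrow> std_cycle k b = a"
proof -
  obtain R where R: "std_cycle k = cyc (b # R)" "distinct (b # R)" "set (b # R) = {1..k}"
    "length (b # R) = k" using std_cycle_from[OF assms(4)] by blast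
  have "a \<in> set (b # R)" "a \<noteq> b" using R(3) assms(2,3) by simp_all
  then have "a \<in> set R" by simp
  from split_list[OF this] obtain X Y where XY: "R = X @ a # Y" by blast
  have dist: "distinct (b # X @ a # Y)" using R(2) XY by simp
  have dn: "d \<notin> set (b # X @ a # Y)" using R(3) XY assms(5) by simp
  have eq: "cyc [a, b, d] \<circ> std_cycle k = cyc (b # X) \<circ> cyc (a # Y @ [d])"
    using cyc3_comp_cycle_split2[OF dist dn] R(1) XY by simp
  show ?thesis
  proof (cases X)
    case Nil
    have "std_cycle k b = a" using R(1) XY Nil cyc_head_value[of b a Y] dist by simp
    moreover have "cyc [a, b, d] \<circ> std_cycle k = cyc (a # Y @ [d])" using eq Nil by simp
    moreover have "distinct (a # Y @ [d])" using dist dn by auto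
    moreover have "length (a # Y @ [d]) = k" using R(4) XY Nil by simp
    ultimately show ?thesis unfolding is_k_cycle_def by blast
  next
    case (Cons x X')
    have "std_cycle k b = x" using R(1) XY Cons cyc_head_value[of b x "X' @ a # Y"] dist by simp
    moreover have "x \<noteq> a" using dist Cons by auto
    moreover have "\<not> is_k_cycle k (cyc (b # X) \<circ> cyc (a # Y @ [d]))"
      using dist dn Cons assms(1) by (intro disjoint_cycles_not_kcycle) auto
    ultimately show ?thesis using eq by simp
  qed
qed

lemma kcycle_increasing_triple:
  assumes "1 \<le> p" "p < q" "q < r" "r \<le> k"
  shows "is_k_cycle k (cyc [p, q, r] \<circ> std_cycle k)"
proof -
  let ?A = "[Suc p..<q]" and ?B = "[Suc q..<r]" and ?C = "[Suc r..<Suc k] @ [1..<p]"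
  note L = std_cycle_cut3[OF assms]
  have reordered_distinct: "distinct (p # A @ r # C @ q # B)"
    if "distinct (p # A @ q # B @ r # C)" for A B C :: "nat list"
    using that by auto
  have "cyc [p, q, r] \<circ> std_cycle k = cyc (p # ?A @ r # ?C @ q # ?B)"
    using cyc3_comp_cycle_reorder[OF L(2)] L(1) by simp
  moreover have "distinct (p # ?A @ r # ?C @ q # ?B)" by (rule reordered_distinct[OF L(2)])
  moreover have "length (p # ?A @ r # ?C @ q # ?B) = k"
  proof -
    have "length (p # ?A @ r # ?C @ q # ?B) = length (p # ?A @ q # ?B @ r # ?C)" by simp
    also have "\<dots> = card {1..k}" using distinct_card[OF L(2)] L(3) by simp
    finally show ?thesis by simp
  qed
  ultimately show ?thesis unfolding is_k_cycle_def by blast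
qed

lemma cyc3_std_cycle_moved_subset:
  assumes "2 \<le> k" "a \<in> {1..k}" "b \<in> {1..k}" "d \<in> {1..k}"
  shows "{x. (cyc [a, b, d] \<circ> std_cycle k) x \<noteq> x} \<subseteq> {1..k}"
proof
  fix x assume x: "x \<in> {x. (cyc [a, b, d] \<circ> std_cycle k) x \<noteq> x}"
  show "x \<in> {1..k}"
  proof (rule ccontr)
    assume nx: "x \<notin> {1..k}"
    then have "x \<notin> set [a, b, d]" using assms by auto
    then have "(cyc [a, b, d] \<circ> std_cycle k) x = x"
      using std_cycle_fix[OF assms(1) nx] by (simp add: id_outside_supp)
    then show False using x by simp
  qed
qed

(* Three points in decreasing cyclic order: the product splits into three cycles, one of
   which contains p but not q, while a k-cycle would have to move all of {1..k}. *)
lemma not_kcycle_decreasing_triple: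
  assumes "1 \<le> p" "p < q" "q < r" "r \<le> k"
  shows "\<not> is_k_cycle k (cyc [p, r, q] \<circ> std_cycle k)"
proof
  assume K: "is_k_cycle k (cyc [p, r, q] \<circ> std_cycle k)"
  have k2: "2 \<le> k" using assms by simp
  let ?A = "[Suc p..<q]" and ?B = "[Suc q..<r]" and ?C = "[Suc r..<Suc k] @ [1..<p]"
  let ?f = "cyc [p, r, q] \<circ> std_cycle k"
  note L = std_cycle_cut3[OF assms]
  have sub: "{x. ?f x \<noteq> x} \<subseteq> {1..k}"
    using assms by (intro cyc3_std_cycle_moved_subset) auto
  have all: "{x. ?f x \<noteq> x} = {1..k}"
    using card_subset_eq[OF _ sub] kcycle_moved_card[OF K k2] by simp
  have "p \<in> {x. ?f x \<noteq> x}" "q \<in> {x. ?f x \<noteq> x}" unfolding all using assms by simp_all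
  then have fp: "?f p \<noteq> p" and fq: "?f q \<noteq> q" by simp_all
  have split: "?f = cyc (p # ?A) \<circ> (cyc (q # ?B) \<circ> cyc (r # ?C))"
    using cyc3_comp_cycle_split3[OF L(2)] L(1) by (simp add: o_assoc)
  have first_cycle_kept:
    "(cyc (p # A) \<circ> (cyc (q # B) \<circ> cyc (r # C))) ` set (p # A) \<subseteq> set (p # A)"
    if "distinct (p # A @ q # B @ r # C)" for A B C :: "nat list"
  proof (rule cyc_comp_keeps_set)
    fix w assume "w \<in> set (p # A)"
    then have "w \<notin> set (r # C)" "w \<notin> set (q # B)" using that by auto
    then show "(cyc (q # B) \<circ> cyc (r # C)) w = w" by (simp add: id_outside_supp)
  qed
  have inv: "?f ` set (p # ?A) \<subseteq> set (p # ?A)"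
    unfolding split by (rule first_cycle_kept[OF L(2)])
  have "q \<notin> set (p # ?A)" using assms by simp
  then show False using kcycle_no_invariant_split[OF K k2 inv _ _ fp fq] by simp
qed

definition good_3cycles :: "nat \<Rightarrow> nat \<Rightarrow> (nat \<Rightarrow> nat) set" where
  "good_3cycles n k = {c. c permutes {1..n} \<and> is_k_cycle 3 c \<and> is_k_cycle k (c \<circ> std_cycle k)}"

definition incr_triples :: "nat \<Rightarrow> (nat \<times> nat \<times> nat) set" where
  "incr_triples k = {(p, q, r). 1 \<le> p \<and> p < q \<and> q < r \<and> r \<le> k}"

definition inner_3cycles :: "nat \<Rightarrow> (nat \<Rightarrow> nat) set" where
  "inner_3cycles k = (\<lambda>(p, q, r). cyc [p, q, r]) ` incr_triples k"

definition straddling_3cycles :: "nat \<Rightarrow> nat \<Rightarrow> (nat \<Rightarrow> nat) set" where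
  "straddling_3cycles n k = (\<lambda>(b, d). cyc [std_cycle k b, b, d]) ` ({1..k} \<times> {Suc k..n})"

lemma good_3cycle_inside:
  assumes "1 \<le> a" "a < b" "a < d" "b \<le> k" "d \<le> k" "b \<noteq> d"
    "is_k_cycle k (cyc [a, b, d] \<circ> std_cycle k)"
  shows "cyc [a, b, d] \<in> inner_3cycles k"
proof (cases "b < d")
  case True
  then have "(a, b, d) \<in> incr_triples k" using assms unfolding incr_triples_def by simp
  then show ?thesis unfolding inner_3cycles_def by force
next
  case False
  then have "d < b" using assms(6) by simp
  then show ?thesis using not_kcycle_decreasing_triple[of a d b k] assms by simp
qed

lemma good_3cycle_mixed:
  assumes "2 \<le> k" "distinct [a, b, d]" "a \<in> {1..k}" "d \<in> {1..n}" "d \<notin> {1..k}"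
    "is_k_cycle k (cyc [a, b, d] \<circ> std_cycle k)"
  shows "cyc [a, b, d] \<in> straddling_3cycles n k"
proof (cases "b \<in> {1..k}")
  case True
  then have "std_cycle k b = a" using kcycle_two_common_iff[OF assms(1-3) True assms(5)] assms(6)
    by simp
  moreover have "(b, d) \<in> {1..k} \<times> {Suc k..n}" using True assms(4,5) by auto
  ultimately show ?thesis unfolding straddling_3cycles_def by force
next
  case False
  then show ?thesis using not_kcycle_one_common[OF assms(1-3) False assms(5)] assms(6) by simp
qed

(* Every good 3-cycle is inner or straddling: rotate (a b d) so that one of the two lemmas
   above applies, the case of no point in {1..k} being impossible. *)
lemma good_3cycle_cases:
  assumes "2 \<le> k" "distinct [a, b, d]" "a \<in> {1..n}" "b \<in> {1..n}" "d \<in> {1..n}"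
    "is_k_cycle k (cyc [a, b, d] \<circ> std_cycle k)"
  shows "cyc [a, b, d] \<in> inner_3cycles k \<union> straddling_3cycles n k"
proof -
  have r1: "cyc [a, b, d] = cyc [b, d, a]" and r2: "cyc [a, b, d] = cyc [d, a, b]"
    using cyc3_rotate[of a b d] cyc3_rotate[of b d a] assms(2) by simp_all
  have d1: "distinct [b, d, a]" and d2: "distinct [d, a, b]" using assms(2) by auto
  have K1: "is_k_cycle k (cyc [b, d, a] \<circ> std_cycle k)"
    and K2: "is_k_cycle k (cyc [d, a, b] \<circ> std_cycle k)" using assms(6) r1 r2 by simp_all
  consider "a \<notin> {1..k}" "b \<notin> {1..k}" "d \<notin> {1..k}" | "a \<in> {1..k}" "b \<in> {1..k}" "d \<in> {1..k}"
    | "a \<in> {1..k}" "d \<notin> {1..k}" | "b \<in> {1..k}" "a \<notin> {1..k}" | "d \<in> {1..k}" "b \<notin> {1..k}"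
    by blast
  then show ?thesis
  proof cases
    case 1 then show ?thesis using not_kcycle_disjoint[OF assms(1,2)] assms(6) by blast
  next
    case 2
    have in_k: "1 \<le> a" "1 \<le> b" "1 \<le> d" "a \<le> k" "b \<le> k" "d \<le> k" using 2 by auto
    have ne: "a \<noteq> b" "b \<noteq> d" "d \<noteq> a" using assms(2) by auto
    consider "a < b" "a < d" | "b < a" "b < d" | "d < a" "d < b" using ne by linarith
    then show ?thesis
    proof cases
      case 1 then show ?thesis using good_3cycle_inside[of a b d k] in_k ne assms(6) by simp
    next
      case 2 then show ?thesis using good_3cycle_inside[of b d a k] in_k ne K1 r1 by simp
    next
      case 3 then show ?thesis using good_3cycle_inside[of d a b k] in_k ne K2 r2 by simp
    qed
  next
    case 3 then show ?thesis using good_3cycle_mixed[OF assms(1,2) _ assms(5) _ assms(6)] by blast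
  next
    case 4 then show ?thesis using good_3cycle_mixed[OF assms(1) d1 _ assms(3) _ K1] r1 by simp
  next
    case 5 then show ?thesis using good_3cycle_mixed[OF assms(1) d2 _ assms(4) _ K2] r2 by simp
  qed
qed

lemma inner_3cycles_good:
  assumes "k \<le> n"
  shows "inner_3cycles k \<subseteq> good_3cycles n k"
proof
  fix c assume "c \<in> inner_3cycles k"
  then obtain p q r where pqr: "1 \<le> p" "p < q" "q < r" "r \<le> k" "c = cyc [p, q, r]"
    unfolding inner_3cycles_def incr_triples_def by auto
  have "c permutes {1..n}" using cyc3_permutes[of p "{1..n}" q r] pqr assms by simp
  moreover have "is_k_cycle 3 c" using cyc3_is_3cycle[of p q r] pqr by simp
  moreover have "is_k_cycle k (c \<circ> std_cycle k)" using kcycle_increasing_triple[OF pqr(1-4)] pqr(5)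
    by simp
  ultimately show "c \<in> good_3cycles n k" unfolding good_3cycles_def by blast
qed

lemma straddling_3cycle_distinct:
  assumes "2 \<le> k" "b \<in> {1..k}" "d \<notin> {1..k}"
  shows "distinct [std_cycle k b, b, d]" "std_cycle k b \<in> {1..k}"
  using std_cycle_in[OF assms(1,2)] std_cycle_move[OF assms(1,2)] assms(2,3) by auto

lemma straddling_3cycles_good:
  assumes "2 \<le> k" "k \<le> n"
  shows "straddling_3cycles n k \<subseteq> good_3cycles n k"
proof
  fix c assume "c \<in> straddling_3cycles n k"
  then obtain b d where bd: "b \<in> {1..k}" "d \<in> {Suc k..n}" "c = cyc [std_cycle k b, b, d]"
    unfolding straddling_3cycles_def by auto
  have dn: "d \<notin> {1..k}" using bd(2) by simp
  note sd = straddling_3cycle_distinct[OF assms(1) bd(1) dn]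
  have "c permutes {1..n}" using cyc3_permutes[of "std_cycle k b" "{1..n}" b d] sd bd assms by simp
  moreover have "is_k_cycle 3 c" using cyc3_is_3cycle[OF sd(1)] bd(3) by simp
  moreover have "is_k_cycle k (c \<circ> std_cycle k)"
    using kcycle_two_common_iff[OF assms(1) sd(1) sd(2) bd(1) dn] bd(3) by simp
  ultimately show "c \<in> good_3cycles n k" unfolding good_3cycles_def by blast
qed

lemma good_3cycles_eq:
  assumes "2 \<le> k" "k \<le> n"
  shows "good_3cycles n k = inner_3cycles k \<union> straddling_3cycles n k"
proof
  show "inner_3cycles k \<union> straddling_3cycles n k \<subseteq> good_3cycles n k"
    using inner_3cycles_good[OF assms(2)] straddling_3cycles_good[OF assms] by blast
  show "good_3cycles n k \<subseteq> inner_3cycles k \<union> straddling_3cycles n k"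
  proof
    fix c assume "c \<in> good_3cycles n k"
    then have c: "c permutes {1..n}" "is_k_cycle 3 c" "is_k_cycle k (c \<circ> std_cycle k)"
      unfolding good_3cycles_def by auto
    obtain a b d where "distinct [a, b, d]" "a \<in> {1..n}" "b \<in> {1..n}" "d \<in> {1..n}"
      "c = cyc [a, b, d]" using is_3cycle_E[OF c(1,2)] by blast
    then show "c \<in> inner_3cycles k \<union> straddling_3cycles n k"
      using good_3cycle_cases[OF assms(1)] c(3) by blast
  qed
qed

(* Inner 3-cycles move only points of {1..k}; straddling ones move a point beyond k. *)
lemma inner_straddling_disjoint:
  assumes "2 \<le> k"
  shows "inner_3cycles k \<inter> straddling_3cycles n k = {}"
proof -
  have False if c1: "c \<in> inner_3cycles k" and c2: "c \<in> straddling_3cycles n k" for c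
  proof -
    obtain p q r where pqr: "1 \<le> p" "p < q" "q < r" "r \<le> k" "c = cyc [p, q, r]"
      using c1 unfolding inner_3cycles_def incr_triples_def by auto
    obtain b d where bd: "b \<in> {1..k}" "d \<in> {Suc k..n}" "c = cyc [std_cycle k b, b, d]"
      using c2 unfolding straddling_3cycles_def by auto
    have "d \<notin> {p, q, r}" using pqr bd(2) by auto
    then have "c d = d" using pqr by (simp add: transpose_def)
    have "d \<notin> {1..k}" using bd(2) by simp
    then have "c d = std_cycle k b" "std_cycle k b \<noteq> d"
      using straddling_3cycle_distinct(1)[OF assms bd(1)] cyc3_values(3) bd(3) by auto
    then show False using \<open>c d = d\<close> by simp
  qed
  then show ?thesis by blast
qed

lemma finite_incr_triples: "finite (incr_triples k)"
proof -
  have "incr_triples k \<subseteq> {1..k} \<times> {1..k} \<times> {1..k}" unfolding incr_triples_def by auto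
  then show ?thesis by (rule finite_subset) simp
qed

(* A 3-cycle determines its moved points, and its inner representative is unique. *)
lemma card_inner_3cycles: "card (inner_3cycles k) = card (incr_triples k)"
  unfolding inner_3cycles_def
proof (rule card_image, rule inj_onI)
  fix x y assume x: "x \<in> incr_triples k" and y: "y \<in> incr_triples k"
    and eq: "(\<lambda>(p, q, r). cyc [p, q, r]) x = (\<lambda>(p, q, r). cyc [p, q, r]) y"
  obtain p q r where xp: "x = (p, q, r)" "1 \<le> p" "p < q" "q < r" "r \<le> k"
    using x unfolding incr_triples_def by auto
  obtain p' q' r' where yp: "y = (p', q', r')" "1 \<le> p'" "p' < q'" "q' < r'" "r' \<le> k"
    using y unfolding incr_triples_def by auto
  have e: "cyc [p, q, r] = cyc [p', q', r']" using eq xp yp by simp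
  have d1: "distinct [p, q, r]" "distinct [p', q', r']" using xp yp by auto
  have "cyc [p', q', r'] p \<noteq> p" using cyc3_values(1)[OF d1(1)] d1(1) unfolding e by auto
  then have "p \<in> {p', q', r'}" using cyc3_values(4)[OF d1(2)] by blast
  moreover have "cyc [p, q, r] p' \<noteq> p'" using cyc3_values(1)[OF d1(2)] d1(2) unfolding e by auto
  then have "p' \<in> {p, q, r}" using cyc3_values(4)[OF d1(1)] by blast
  ultimately have pp: "p = p'" using xp yp by auto
  have qq: "q = q'" using cyc3_values(1)[OF d1(1)] cyc3_values(1)[OF d1(2)] e pp by metis
  have rr: "r = r'" using cyc3_values(2)[OF d1(1)] cyc3_values(2)[OF d1(2)] e qq by metis
  show "x = y" using xp yp pp qq rr by simp
qed

(* A straddling 3-cycle determines its point d beyond k, then b' = c d and b = c b'. *)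
lemma card_straddling_3cycles:
  assumes "2 \<le> k"
  shows "card (straddling_3cycles n k) = k * (n - k)"
proof -
  have "inj_on (\<lambda>(b, d). cyc [std_cycle k b, b, d]) ({1..k} \<times> {Suc k..n})"
  proof (rule inj_onI)
    fix x y assume x: "x \<in> {1..k} \<times> {Suc k..n}" and y: "y \<in> {1..k} \<times> {Suc k..n}"
      and eq: "(\<lambda>(b, d). cyc [std_cycle k b, b, d]) x = (\<lambda>(b, d). cyc [std_cycle k b, b, d]) y"
    obtain b d where xb: "x = (b, d)" "b \<in> {1..k}" "d \<in> {Suc k..n}" using x by auto
    obtain b' d' where yb: "y = (b', d')" "b' \<in> {1..k}" "d' \<in> {Suc k..n}" using y by auto
    have e: "cyc [std_cycle k b, b, d] = cyc [std_cycle k b', b', d']" using eq xb yb by simp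
    have dn: "d \<notin> {1..k}" "d' \<notin> {1..k}" using xb(3) yb(3) by auto
    note s1 = straddling_3cycle_distinct[OF assms xb(2) dn(1)]
    note d1 = s1(1) and d2 = straddling_3cycle_distinct(1)[OF assms yb(2) dn(2)]
    have "cyc [std_cycle k b, b, d] d' \<noteq> d'" using cyc3_values(3)[OF d2] d2 unfolding e by auto
    then have "d' \<in> {std_cycle k b, b, d}" using cyc3_values(4)[OF d1] by blast
    then have dd: "d = d'" using s1(2) xb yb by auto
    have "std_cycle k b = std_cycle k b'" using cyc3_values(3)[OF d1] cyc3_values(3)[OF d2] e dd
      by metis
    then have "b = b'" using cyc3_values(1)[OF d1] cyc3_values(1)[OF d2] e by metis
    then show "x = y" using xb yb dd by simp
  qed
  then have "card (straddling_3cycles n k) = card ({1..k} \<times> {Suc k..n})"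
    unfolding straddling_3cycles_def by (rule card_image)
  also have "\<dots> = k * (n - k)" by (simp add: card_cartesian_product)
  finally show ?thesis .
qed

lemma card_good_3cycles:
  assumes "2 \<le> k" "k \<le> n"
  shows "card (good_3cycles n k) = card (incr_triples k) + k * (n - k)"
proof -
  have "finite (inner_3cycles k)" unfolding inner_3cycles_def using finite_incr_triples by simp
  moreover have "finite (straddling_3cycles n k)" unfolding straddling_3cycles_def by simp
  ultimately have "card (good_3cycles n k) = card (inner_3cycles k) + card (straddling_3cycles n k)"
    using good_3cycles_eq[OF assms] card_Un_disjoint inner_straddling_disjoint[OF assms(1)] by metis
  then show ?thesis using card_inner_3cycles card_straddling_3cycles[OF assms(1)] by simp
qed

definition incr_pairs :: "nat \<Rightarrow> (nat \<times> nat) set" where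
  "incr_pairs k = {(p, q). 1 \<le> p \<and> p < q \<and> q \<le> k}"

lemma finite_incr_pairs: "finite (incr_pairs k)"
proof -
  have "incr_pairs k \<subseteq> {1..k} \<times> {1..k}" unfolding incr_pairs_def by auto
  then show ?thesis by (rule finite_subset) simp
qed

lemma card_incr_pairs: "real (card (incr_pairs k)) = real k * (real k - 1) / 2"
proof (induction k)
  case 0
  have "incr_pairs 0 = {}" unfolding incr_pairs_def by auto
  then show ?case by simp
next
  case (Suc k)
  have e: "incr_pairs (Suc k) = incr_pairs k \<union> (\<lambda>p. (p, Suc k)) ` {1..k}"
    unfolding incr_pairs_def by auto
  have d: "incr_pairs k \<inter> (\<lambda>p. (p, Suc k)) ` {1..k} = {}" unfolding incr_pairs_def by auto
  have "card (incr_pairs (Suc k)) = card (incr_pairs k) + card ((\<lambda>p. (p, Suc k)) ` {1..k})"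
    unfolding e by (rule card_Un_disjoint[OF finite_incr_pairs _ d]) simp
  also have "card ((\<lambda>p. (p, Suc k)) ` {1..k}) = k" by (subst card_image) (auto simp: inj_on_def)
  finally have "real (card (incr_pairs (Suc k))) = real (card (incr_pairs k)) + real k" by simp
  then show ?case using Suc.IH by (simp add: field_simps)
qed

(* Increasing triples up to k+1 are those up to k plus those ending in k+1. *)
lemma card_incr_triples: "real (card (incr_triples k)) = real k * (real k - 1) * (real k - 2) / 6"
proof (induction k)
  case 0
  have "incr_triples 0 = {}" unfolding incr_triples_def by auto
  then show ?case by simp
next
  case (Suc k)
  let ?new = "(\<lambda>(p, q). (p, q, Suc k)) ` incr_pairs k"
  have e: "incr_triples (Suc k) = incr_triples k \<union> ?new"
    unfolding incr_triples_def incr_pairs_def by (auto simp: le_Suc_eq image_iff)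
  have d: "incr_triples k \<inter> ?new = {}" unfolding incr_triples_def incr_pairs_def by auto
  have "card (incr_triples (Suc k)) = card (incr_triples k) + card ?new"
    unfolding e by (rule card_Un_disjoint[OF finite_incr_triples _ d]) (simp add: finite_incr_pairs)
  also have "card ?new = card (incr_pairs k)" by (subst card_image) (auto simp: inj_on_def)
  finally have "real (card (incr_triples (Suc k))) = real (card (incr_triples k)) + real (card (incr_pairs k))"
    by simp
  then show ?case using Suc.IH card_incr_pairs[of k] by (simp add: field_simps)
qed

definition conj_class :: "'a set \<Rightarrow> ('a \<Rightarrow> 'a) \<Rightarrow> ('a \<Rightarrow> 'a) set" where
  "conj_class S s = (\<lambda>g. g \<circ> s \<circ> inv g) ` {g. g permutes S}"

definition centralizer :: "'a set \<Rightarrow> ('a \<Rightarrow> 'a) \<Rightarrow> ('a \<Rightarrow> 'a) set" where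
  "centralizer S s = {h. h permutes S \<and> h \<circ> s = s \<circ> h}"

definition comm_partners :: "'a set \<Rightarrow> ('a \<Rightarrow> 'a) \<Rightarrow> ('a \<Rightarrow> 'a) set" where
  "comm_partners S s = {t. t permutes S \<and> is_k_cycle 3 (s \<circ> t \<circ> inv s \<circ> inv t)}"

definition conj_3cycles :: "'a set \<Rightarrow> ('a \<Rightarrow> 'a) \<Rightarrow> ('a \<Rightarrow> 'a) set" where
  "conj_3cycles S s = {c. c permutes S \<and> is_k_cycle 3 c \<and> c \<circ> s \<in> conj_class S s}"

lemma inv_comp_permutes:
  assumes "g permutes S" "s permutes S"
  shows "inv (g \<circ> s) = inv s \<circ> inv g"
  by (rule inv_unique_comp)
    (auto simp: fun_eq_iff permutes_inverses[OF assms(1)] permutes_inverses[OF assms(2)])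

lemma inv_conj_permutes:
  assumes "g permutes S" "s permutes S"
  shows "inv (g \<circ> s \<circ> inv g) = g \<circ> inv s \<circ> inv g"
  by (rule inv_unique_comp)
    (auto simp: fun_eq_iff permutes_inverses[OF assms(1)] permutes_inverses[OF assms(2)])

lemma conj_permutes: "g permutes S \<Longrightarrow> s permutes S \<Longrightarrow> g \<circ> s \<circ> inv g permutes S"
  by (metis permutes_compose permutes_inv)

lemma card_by_fibres:
  assumes "finite A" "\<And>u. u \<in> f ` A \<Longrightarrow> card {x\<in>A. f x = u} = c"
  shows "card A = card (f ` A) * c"
proof -
  have "card A = (\<Sum>x\<in>A. 1::nat)" by simp
  also have "\<dots> = (\<Sum>u\<in>f ` A. \<Sum>x\<in>{x\<in>A. f x = u}. 1)" by (rule sum.image_gen[OF assms(1)])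
  also have "\<dots> = (\<Sum>u\<in>f ` A. c)" using assms(2) by (intro sum.cong) auto
  finally show ?thesis by simp
qed

lemma conj_fibre:
  assumes "s permutes S" "g0 permutes S"
  shows "{g. g permutes S \<and> g \<circ> s \<circ> inv g = g0 \<circ> s \<circ> inv g0} = (\<lambda>h. g0 \<circ> h) ` centralizer S s"
proof
  show "(\<lambda>h. g0 \<circ> h) ` centralizer S s \<subseteq> {g. g permutes S \<and> g \<circ> s \<circ> inv g = g0 \<circ> s \<circ> inv g0}"
  proof
    fix g assume "g \<in> (\<lambda>h. g0 \<circ> h) ` centralizer S s"
    then obtain h where h: "h permutes S" "h \<circ> s = s \<circ> h" "g = g0 \<circ> h"
      unfolding centralizer_def by blast
    have "inv g = inv h \<circ> inv g0" using inv_comp_permutes[OF assms(2) h(1)] h(3) by simp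
    then have "g \<circ> s \<circ> inv g = g0 \<circ> (h \<circ> s) \<circ> inv h \<circ> inv g0" using h(3) by (simp add: o_assoc)
    also have "\<dots> = g0 \<circ> s \<circ> (h \<circ> inv h) \<circ> inv g0" using h(2) by (simp add: o_assoc)
    also have "\<dots> = g0 \<circ> s \<circ> inv g0" using permutes_inv_o(1)[OF h(1)] by simp
    finally show "g \<in> {g. g permutes S \<and> g \<circ> s \<circ> inv g = g0 \<circ> s \<circ> inv g0}"
      using h(1,3) assms(2) permutes_compose by blast
  qed
  show "{g. g permutes S \<and> g \<circ> s \<circ> inv g = g0 \<circ> s \<circ> inv g0} \<subseteq> (\<lambda>h. g0 \<circ> h) ` centralizer S s"
  proof
    fix g assume "g \<in> {g. g permutes S \<and> g \<circ> s \<circ> inv g = g0 \<circ> s \<circ> inv g0}"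
    then have g: "g permutes S" "g \<circ> s \<circ> inv g = g0 \<circ> s \<circ> inv g0" by auto
    define h where "h = inv g0 \<circ> g"
    have hp: "h permutes S" unfolding h_def using permutes_compose[OF g(1) permutes_inv[OF assms(2)]] .
    have "h \<circ> s = s \<circ> h"
    proof
      fix x
      have "g (s (inv g (g x))) = g0 (s (inv g0 (g x)))" using fun_cong[OF g(2), of "g x"] by simp
      then have "g (s x) = g0 (s (inv g0 (g x)))" by (simp add: permutes_inverses[OF g(1)])
      then have "inv g0 (g (s x)) = s (inv g0 (g x))" by (simp add: permutes_inverses[OF assms(2)])
      then show "(h \<circ> s) x = (s \<circ> h) x" unfolding h_def by simp
    qed
    moreover have "g = g0 \<circ> h" unfolding h_def using permutes_inv_o(1)[OF assms(2)] by (simp add: o_assoc)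
    ultimately show "g \<in> (\<lambda>h. g0 \<circ> h) ` centralizer S s" using hp unfolding centralizer_def by blast
  qed
qed

lemma card_conj_fibre:
  assumes "s permutes S" "g0 permutes S"
  shows "card {g. g permutes S \<and> g \<circ> s \<circ> inv g = g0 \<circ> s \<circ> inv g0} = card (centralizer S s)"
proof -
  have "inj_on (\<lambda>h. g0 \<circ> h) (centralizer S s)"
  proof (rule inj_onI)
    fix h1 h2 assume "g0 \<circ> h1 = g0 \<circ> h2"
    then have "inv g0 \<circ> (g0 \<circ> h1) = inv g0 \<circ> (g0 \<circ> h2)" by simp
    then show "h1 = h2" using permutes_inv_o(2)[OF assms(2)] by (simp add: o_assoc)
  qed
  then show ?thesis using conj_fibre[OF assms] by (simp add: card_image)
qed

lemma card_conj_class_centralizer: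
  assumes "finite S" "s permutes S"
  shows "card (conj_class S s) * card (centralizer S s) = fact (card S)"
proof -
  let ?P = "{g. g permutes S}"
  have "card ?P = card ((\<lambda>g. g \<circ> s \<circ> inv g) ` ?P) * card (centralizer S s)"
  proof (rule card_by_fibres)
    show "finite ?P" using finite_permutations[OF assms(1)] .
    fix u assume "u \<in> (\<lambda>g. g \<circ> s \<circ> inv g) ` ?P"
    then obtain g0 where g0: "g0 permutes S" "u = g0 \<circ> s \<circ> inv g0" by blast
    then show "card {g \<in> ?P. g \<circ> s \<circ> inv g = u} = card (centralizer S s)"
      using card_conj_fibre[OF assms(2) g0(1)] by simp
  qed
  then show ?thesis using card_permutations[OF refl assms(1)] unfolding conj_class_def by simp
qed

lemma finite_comm_partners: "finite S \<Longrightarrow> finite (comm_partners S s)"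
  unfolding comm_partners_def by (rule finite_subset[OF _ finite_permutations]) auto

lemma commutator_conj:
  assumes "g permutes S" "s permutes S" "t permutes S"
  shows "(g \<circ> s \<circ> inv g) \<circ> (g \<circ> t \<circ> inv g) \<circ> inv (g \<circ> s \<circ> inv g) \<circ> inv (g \<circ> t \<circ> inv g)
     = g \<circ> (s \<circ> t \<circ> inv s \<circ> inv t) \<circ> inv g"
  unfolding inv_conj_permutes[OF assms(1,2)] inv_conj_permutes[OF assms(1,3)]
  by (simp add: fun_eq_iff permutes_inverses[OF assms(1)])

lemma commutator_via_conjugate:
  assumes "s permutes S" "t permutes S"
  shows "s \<circ> t \<circ> inv s \<circ> inv t = s \<circ> inv (t \<circ> s \<circ> inv t)"
  unfolding inv_conj_permutes[OF assms(2,1)] by (simp add: o_assoc)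

(* Conjugation by g maps the partners of s injectively to the partners of g s g^-1. *)
lemma card_comm_partners_conj_le:
  assumes "finite S" "g permutes S" "s permutes S"
  shows "card (comm_partners S s) \<le> card (comm_partners S (g \<circ> s \<circ> inv g))"
proof (rule card_inj_on_le[of "\<lambda>t. g \<circ> t \<circ> inv g"])
  show "inj_on (\<lambda>t. g \<circ> t \<circ> inv g) (comm_partners S s)"
  proof (rule inj_onI)
    fix t1 t2 assume e: "g \<circ> t1 \<circ> inv g = g \<circ> t2 \<circ> inv g"
    show "t1 = t2"
    proof
      fix x
      have "g (t1 (inv g (g x))) = g (t2 (inv g (g x)))" using fun_cong[OF e, of "g x"] by simp
      then have "g (t1 x) = g (t2 x)" by (simp add: permutes_inverses[OF assms(2)])
      then show "t1 x = t2 x" using permutes_inj[OF assms(2)] by (simp add: inj_eq)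
    qed
  qed
  show "(\<lambda>t. g \<circ> t \<circ> inv g) ` comm_partners S s \<subseteq> comm_partners S (g \<circ> s \<circ> inv g)"
  proof
    fix u assume "u \<in> (\<lambda>t. g \<circ> t \<circ> inv g) ` comm_partners S s"
    then obtain t where t: "t permutes S" "is_k_cycle 3 (s \<circ> t \<circ> inv s \<circ> inv t)" "u = g \<circ> t \<circ> inv g"
      unfolding comm_partners_def by blast
    have "u permutes S" using conj_permutes[OF assms(2) t(1)] t(3) by simp
    moreover have "is_k_cycle 3 ((g \<circ> s \<circ> inv g) \<circ> u \<circ> inv (g \<circ> s \<circ> inv g) \<circ> inv u)"
      using commutator_conj[OF assms(2,3) t(1)] kcycle_conj[OF permutes_bij[OF assms(2)] t(2)] t(3)
      by simp
    ultimately show "u \<in> comm_partners S (g \<circ> s \<circ> inv g)" unfolding comm_partners_def by blast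
  qed
  show "finite (comm_partners S (g \<circ> s \<circ> inv g))" by (rule finite_comm_partners[OF assms(1)])
qed

lemma card_comm_partners_conj:
  assumes "finite S" "g permutes S" "s permutes S"
  shows "card (comm_partners S (g \<circ> s \<circ> inv g)) = card (comm_partners S s)"
proof -
  have "inv g \<circ> (g \<circ> s \<circ> inv g) \<circ> inv (inv g) = s"
    unfolding permutes_inv_inv[OF assms(2)] by (simp add: fun_eq_iff permutes_inverses[OF assms(2)])
  then have "card (comm_partners S (g \<circ> s \<circ> inv g)) \<le> card (comm_partners S s)"
    using card_comm_partners_conj_le[OF assms(1) permutes_inv[OF assms(2)] conj_permutes[OF assms(2,3)]]
    by simp
  then show ?thesis using card_comm_partners_conj_le[OF assms] by simp
qed

lemma commutator_eq_inv:
  assumes "s permutes S" "t permutes S" "c permutes S" "c \<circ> s = t \<circ> s \<circ> inv t"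
  shows "s \<circ> t \<circ> inv s \<circ> inv t = inv c"
proof -
  have "s \<circ> t \<circ> inv s \<circ> inv t = s \<circ> inv (c \<circ> s)"
    using commutator_via_conjugate[OF assms(1,2)] assms(4) by simp
  also have "\<dots> = s \<circ> (inv s \<circ> inv c)" using inv_comp_permutes[OF assms(3,1)] by simp
  also have "\<dots> = inv c" using permutes_inv_o(1)[OF assms(1)] by (simp add: o_assoc)
  finally show ?thesis .
qed

lemma inv_3cycle_iff: "c permutes S \<Longrightarrow> is_k_cycle 3 (inv c) \<longleftrightarrow> is_k_cycle 3 c"
  using inv_3cycle permutes_inv_inv by metis

lemma comm_partners_conj_image:
  assumes "s permutes S"
  shows "(\<lambda>t. t \<circ> s \<circ> inv t) ` comm_partners S s = (\<lambda>c. c \<circ> s) ` conj_3cycles S s"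
proof
  show "(\<lambda>t. t \<circ> s \<circ> inv t) ` comm_partners S s \<subseteq> (\<lambda>c. c \<circ> s) ` conj_3cycles S s"
  proof
    fix u assume "u \<in> (\<lambda>t. t \<circ> s \<circ> inv t) ` comm_partners S s"
    then obtain t where t: "t permutes S" "is_k_cycle 3 (s \<circ> t \<circ> inv s \<circ> inv t)"
      "u = t \<circ> s \<circ> inv t" unfolding comm_partners_def by blast
    define c where "c = u \<circ> inv s"
    have cp: "c permutes S"
      unfolding c_def t(3) by (intro permutes_compose[OF permutes_inv] conj_permutes t(1) assms)
    have cs: "c \<circ> s = u" unfolding c_def using permutes_inv_o(2)[OF assms] by (metis comp_assoc comp_id)
    have "is_k_cycle 3 c"
      using t(2) commutator_eq_inv[OF assms t(1) cp] cs t(3) inv_3cycle_iff[OF cp] by simp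
    moreover have "c \<circ> s \<in> conj_class S s" using cs t(1,3) unfolding conj_class_def by blast
    ultimately show "u \<in> (\<lambda>c. c \<circ> s) ` conj_3cycles S s"
      using cp cs unfolding conj_3cycles_def by blast
  qed
  show "(\<lambda>c. c \<circ> s) ` conj_3cycles S s \<subseteq> (\<lambda>t. t \<circ> s \<circ> inv t) ` comm_partners S s"
  proof
    fix u assume "u \<in> (\<lambda>c. c \<circ> s) ` conj_3cycles S s"
    then obtain c g where c: "c permutes S" "is_k_cycle 3 c" "u = c \<circ> s"
      and g: "g permutes S" "c \<circ> s = g \<circ> s \<circ> inv g"
      unfolding conj_3cycles_def conj_class_def by blast
    have "is_k_cycle 3 (s \<circ> g \<circ> inv s \<circ> inv g)"
      using commutator_eq_inv[OF assms g(1) c(1) g(2)] inv_3cycle_iff[OF c(1)] c(2) by simp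
    then show "u \<in> (\<lambda>t. t \<circ> s \<circ> inv t) ` comm_partners S s"
      using g c(3) unfolding comm_partners_def by blast
  qed
qed

lemma card_comm_partners_fibre:
  assumes "s permutes S" "u \<in> (\<lambda>t. t \<circ> s \<circ> inv t) ` comm_partners S s"
  shows "card {t \<in> comm_partners S s. t \<circ> s \<circ> inv t = u} = card (centralizer S s)"
proof -
  obtain t0 where t0: "t0 \<in> comm_partners S s" "u = t0 \<circ> s \<circ> inv t0" using assms(2) by blast
  have t0p: "t0 permutes S" using t0(1) unfolding comm_partners_def by blast
  have "{t \<in> comm_partners S s. t \<circ> s \<circ> inv t = u}
      = {g. g permutes S \<and> g \<circ> s \<circ> inv g = t0 \<circ> s \<circ> inv t0}"
  proof (intro set_eqI iffI)
    fix t assume "t \<in> {t \<in> comm_partners S s. t \<circ> s \<circ> inv t = u}"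
    then show "t \<in> {g. g permutes S \<and> g \<circ> s \<circ> inv g = t0 \<circ> s \<circ> inv t0}"
      using t0(2) unfolding comm_partners_def by simp
  next
    fix t assume t: "t \<in> {g. g permutes S \<and> g \<circ> s \<circ> inv g = t0 \<circ> s \<circ> inv t0}"
    then have "s \<circ> t \<circ> inv s \<circ> inv t = s \<circ> t0 \<circ> inv s \<circ> inv t0"
      using commutator_via_conjugate[OF assms(1)] t0p by simp
    then show "t \<in> {t \<in> comm_partners S s. t \<circ> s \<circ> inv t = u}"
      using t t0 unfolding comm_partners_def by simp
  qed
  then show ?thesis using card_conj_fibre[OF assms(1) t0p] by simp
qed

(* Counting partners through their conjugates t s t^-1. *)
lemma card_comm_partners:
  assumes "finite S" "s permutes S"
  shows "card (comm_partners S s) = card (conj_3cycles S s) * card (centralizer S s)"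
proof -
  have inj: "inj_on (\<lambda>c. c \<circ> s) (conj_3cycles S s)"
  proof (rule inj_onI)
    fix c1 c2 :: "'a \<Rightarrow> 'a" assume "c1 \<circ> s = c2 \<circ> s"
    then have "c1 \<circ> s \<circ> inv s = c2 \<circ> s \<circ> inv s" by simp
    then show "c1 = c2" using permutes_inv_o(1)[OF assms(2)] by (metis comp_assoc comp_id)
  qed
  have "card (comm_partners S s)
      = card ((\<lambda>t. t \<circ> s \<circ> inv t) ` comm_partners S s) * card (centralizer S s)"
    by (rule card_by_fibres[OF finite_comm_partners[OF assms(1)] card_comm_partners_fibre[OF assms(2)]])
  also have "card ((\<lambda>t. t \<circ> s \<circ> inv t) ` comm_partners S s) = card (conj_3cycles S s)"
    unfolding comm_partners_conj_image[OF assms(2)] by (rule card_image[OF inj])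
  finally show ?thesis .
qed

lemma sum_comm_partners_over_class:
  assumes "finite S" "s permutes S"
  shows "(\<Sum>u\<in>conj_class S s. card (comm_partners S u)) = fact (card S) * card (conj_3cycles S s)"
proof -
  have "(\<Sum>u\<in>conj_class S s. card (comm_partners S u)) = (\<Sum>u\<in>conj_class S s. card (comm_partners S s))"
    using card_comm_partners_conj[OF assms(1) _ assms(2)] unfolding conj_class_def
    by (intro sum.cong) auto
  also have "\<dots> = card (conj_class S s) * card (centralizer S s) * card (conj_3cycles S s)"
    using card_comm_partners[OF assms] by (simp add: ac_simps)
  also have "\<dots> = fact (card S) * card (conj_3cycles S s)"
    using card_conj_class_centralizer[OF assms] by simp
  finally show ?thesis .
qed

lemma kcycles_conj_class:
  assumes "2 \<le> k" "k \<le> n"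
  shows "{s. s permutes {1..n} \<and> is_k_cycle k s} = conj_class {1..n} (std_cycle k)"
proof
  show "conj_class {1..n} (std_cycle k) \<subseteq> {s. s permutes {1..n} \<and> is_k_cycle k s}"
  proof
    fix u assume "u \<in> conj_class {1..n} (std_cycle k)"
    then obtain g where g: "g permutes {1..n}" "u = g \<circ> std_cycle k \<circ> inv g"
      unfolding conj_class_def by blast
    then show "u \<in> {s. s permutes {1..n} \<and> is_k_cycle k s}"
      using conj_permutes[OF g(1) std_cycle_permutes[OF assms(2)]]
        kcycle_conj[OF permutes_bij[OF g(1)] std_cycle_is_kcycle] by simp
  qed
  show "{s. s permutes {1..n} \<and> is_k_cycle k s} \<subseteq> conj_class {1..n} (std_cycle k)"
  proof
    fix u assume "u \<in> {s. s permutes {1..n} \<and> is_k_cycle k s}"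
    then have u: "u permutes {1..n}" "is_k_cycle k u" by auto
    obtain cs where cs: "distinct cs" "length cs = k" "u = cyc cs"
      using u(2) unfolding is_k_cycle_def by blast
    have "set cs = {x. u x \<noteq> x}" using cyc_moved_points[OF cs(1)] cs assms by simp
    also have "\<dots> \<subseteq> {1..n}" using permutes_not_in[OF u(1)] by blast
    finally have csS: "set cs \<subseteq> {1..n}" .
    have std: "distinct [1..<Suc k]" "length [1..<Suc k] = length cs" "set [1..<Suc k] \<subseteq> {1..n}"
      using cs(2) assms by auto
    obtain g where g: "g permutes {1..n}" "map g [1..<Suc k] = cs"
      using permutes_map_list[OF std(1) cs(1) std(2,3) csS] by blast
    have "g \<circ> std_cycle k \<circ> inv g = cyc (map g [1..<Suc k])"
      unfolding std_cycle_def using conjugation_of_cycle[OF std(1) permutes_bij[OF g(1)]] .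
    then have "u = g \<circ> std_cycle k \<circ> inv g" using g(2) cs(3) by simp
    then show "u \<in> conj_class {1..n} (std_cycle k)" unfolding conj_class_def using g(1) by blast
  qed
qed

lemma conj_3cycles_std_cycle:
  assumes "2 \<le> k" "k \<le> n"
  shows "conj_3cycles {1..n} (std_cycle k) = good_3cycles n k"
proof -
  have "c \<circ> std_cycle k permutes {1..n}" if "c permutes {1..n}" for c
    using permutes_compose[OF std_cycle_permutes[OF assms(2)] that] .
  then show ?thesis
    unfolding conj_3cycles_def good_3cycles_def kcycles_conj_class[OF assms, symmetric] by auto
qed

lemma sum_comm_partners_kcycles:
  assumes "2 \<le> k" "k \<le> n"
  shows "(\<Sum>s\<in>{s. s permutes {1..n} \<and> is_k_cycle k s}. card (comm_partners {1..n} s))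
    = fact n * (card (incr_triples k) + k * (n - k))"
  using sum_comm_partners_over_class[OF _ std_cycle_permutes[OF assms(2)]]
  unfolding kcycles_conj_class[OF assms] conj_3cycles_std_cycle[OF assms] card_good_3cycles[OF assms]
  by simp

lemma card_pairs_by_cycle_length:
  assumes "finite S" "finite I" "\<And>k. k \<in> I \<Longrightarrow> 2 \<le> k"
  shows "card {(s, t). s permutes S \<and> t permutes S \<and> (\<exists>k\<in>I. is_k_cycle k s) \<and>
                   is_k_cycle 3 (s \<circ> t \<circ> inv s \<circ> inv t)}
    = (\<Sum>k\<in>I. \<Sum>s\<in>{s. s permutes S \<and> is_k_cycle k s}. card (comm_partners S s))"
proof -
  let ?K = "\<lambda>k. {s. s permutes S \<and> is_k_cycle k s}"
  let ?A = "\<lambda>k. Sigma (?K k) (comm_partners S)"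
  have eq: "{(s, t). s permutes S \<and> t permutes S \<and> (\<exists>k\<in>I. is_k_cycle k s) \<and>
                   is_k_cycle 3 (s \<circ> t \<circ> inv s \<circ> inv t)} = (\<Union>k\<in>I. ?A k)"
    unfolding comm_partners_def by auto
  have finK: "finite (?K k)" for k
    by (rule finite_subset[OF _ finite_permutations[OF assms(1)]]) auto
  have disj: "?A i \<inter> ?A j = {}" if "i \<in> I" "j \<in> I" "i \<noteq> j" for i j
  proof -
    have "?K i \<inter> ?K j = {}" using kcycle_length_unique assms(3) that by blast
    then show ?thesis by blast
  qed
  have "card (\<Union>k\<in>I. ?A k) = (\<Sum>k\<in>I. card (?A k))"
    using finK finite_comm_partners[OF assms(1)] disj by (intro card_UN_disjoint assms(2)) auto
  then show ?thesis unfolding eq using finK finite_comm_partners[OF assms(1)] by simp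
qed

lemma sum_closed_form_aux:
  "(\<Sum>k\<in>{2..Suc m}. real k * (real k - 1) * (real k - 2) / 6 + real k * (N - real k))
   = (real m + 2) * (real m + 1) * real m * (real m - 1) / 24
     + N * ((real m + 1) * (real m + 2) / 2 - 1) - ((real m + 1) * (real m + 2) * (2 * real m + 3) / 6 - 1)"
proof (induction m)
  case 0 then show ?case by simp
next
  case (Suc m)
  have "{2..Suc (Suc m)} = insert (Suc (Suc m)) {2..Suc m}" by (rule atLeastAtMostSuc_conv) simp
  then show ?case using Suc.IH by (simp add: field_simps)
qed

lemma sum_closed_form:
  assumes "1 \<le> n"
  shows "(\<Sum>k\<in>{2..n}. real k * (real k - 1) * (real k - 2) / 6 + real k * (real n - real k))
    = (real n - 1) * (real n - 2) * ((real n)\<^sup>2 + 5 * real n + 12) / 24"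
proof -
  obtain m where m: "n = Suc m" using assms by (cases n) auto
  show ?thesis unfolding m sum_closed_form_aux by (simp add: field_simps power2_eq_square)
qed

theorem mainTheorem9:
  fixes n :: nat
  assumes "n > 2"
  shows "real (card {(s, t). s permutes {1..n} \<and> t permutes {1..n} \<and>
                   (\<exists>k\<in>{2..n}. is_k_cycle k s) \<and>
                   is_k_cycle 3 (s \<circ> t \<circ> inv s \<circ> inv t)})
         = (real n - 1) * (real n - 2) * ((real n)\<^sup>2 + 5 * real n + 12) * fact n / 24"
proof -
  let ?f = "\<lambda>k. real k * (real k - 1) * (real k - 2) / 6 + real k * (real n - real k)"
  have "card {(s, t). s permutes {1..n} \<and> t permutes {1..n} \<and> (\<exists>k\<in>{2..n}. is_k_cycle k s) \<and>
                   is_k_cycle 3 (s \<circ> t \<circ> inv s \<circ> inv t)}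
      = (\<Sum>k\<in>{2..n}. \<Sum>s\<in>{s. s permutes {1..n} \<and> is_k_cycle k s}. card (comm_partners {1..n} s))"
    by (rule card_pairs_by_cycle_length) auto
  also have "\<dots> = (\<Sum>k\<in>{2..n}. fact n * (card (incr_triples k) + k * (n - k)))"
    by (rule sum.cong[OF refl], rule sum_comm_partners_kcycles) auto
  also have "real \<dots> = (\<Sum>k\<in>{2..n}. fact n * ?f k)"
    unfolding of_nat_sum by (rule sum.cong[OF refl]) (auto simp: card_incr_triples of_nat_diff)
  also have "\<dots> = fact n * (real n - 1) * (real n - 2) * ((real n)\<^sup>2 + 5 * real n + 12) / 24"
    using sum_closed_form[of n] assms by (simp add: sum_distrib_left[symmetric])
  finally show ?thesis by simp
qed

end
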